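(* A topological group $G$ is metrizable if and only if $G$ is a Fréchet–Urysohn $\aleph$-space.
   Context: A $k$-network in $X$ is a family $\mathcal N$ of subsets such that whenever $K\subset U$ with $K$ compact and $U$ open, there is a finite $\mathcal F\subset\mathcal N$ with $K\subset\bigcup\mathcal F\subset U$; an $\aleph$-space is a regular space with a $\sigma$-locally finite $k$-network. *)

theory Defs
  imports "HOL-Analysis.Analysis"
begin

definition locally_finite_family :: "'a topology \<Rightarrow> 'a set set \<Rightarrow> bool" where
  "locally_finite_family X \<F> \<longleftrightarrow>
     (\<forall>x\<in>topspace X. \<exists>U. openin X U \<and> x \<in> U \<and> finite {A\<in>\<F>. A \<inter> U \<noteq> {}})"

definition sigma_locally_finite :: "'a topology \<Rightarrow> 'a set set \<Rightarrow> bool" where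
  "sigma_locally_finite X \<N> \<longleftrightarrow>
     (\<exists>\<F> :: nat \<Rightarrow> 'a set set. \<N> = (\<Union>n. \<F> n) \<and> (\<forall>n. locally_finite_family X (\<F> n)))"

definition k_network :: "'a topology \<Rightarrow> 'a set set \<Rightarrow> bool" where
  "k_network X \<N> \<longleftrightarrow>
     (\<forall>N\<in>\<N>. N \<subseteq> topspace X) \<and>
     (\<forall>K U. compactin X K \<and> openin X U \<and> K \<subseteq> U \<longrightarrow>
        (\<exists>\<F>. finite \<F> \<and> \<F> \<subseteq> \<N> \<and> K \<subseteq> \<Union>\<F> \<and> \<Union>\<F> \<subseteq> U))"

text \<open>Regular in the classical sense (T_3, i.e. including T_1).\<close>
definition aleph_space :: "'a topology \<Rightarrow> bool" where
  "aleph_space X \<longleftrightarrow> regular_space X \<and> t1_space X \<and>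
     (\<exists>\<N>. k_network X \<N> \<and> sigma_locally_finite X \<N>)"

definition Frechet_Urysohn_space :: "'a topology \<Rightarrow> bool" where
  "Frechet_Urysohn_space X \<longleftrightarrow>
     (\<forall>A x. A \<subseteq> topspace X \<and> x \<in> X closure_of A \<longrightarrow>
        (\<exists>s. (\<forall>n. s n \<in> A) \<and> limitin X s x sequentially))"

end

theory Submission
  imports Defs
begin

text \<open>A metric space has a \<sigma>-locally finite base (Stone), which is in particular a
  k-network, and closures in it are sequential. Conversely, let G be a Frechet--Urysohn
  \<open>\<aleph>\<close>-group. The members of a \<sigma>-locally finite k-network whose closure contains 0 form
  a countable family \<open>\<C>\<close> that catches, inside any neighbourhood of 0, infinitely many terms
  of any sequence converging to 0. If G is not discrete, a diagonal argument, available because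
  G is Frechet--Urysohn and translations are homeomorphisms, shows that for every neighbourhood
  U of 0 already finitely many members of \<open>\<C>\<close> inside U have a union that is a neighbourhood of 0.
  Hence G is first countable, and a first countable T1 group is metrizable by the
  Birkhoff--Kakutani theorem.\<close>

lemma open_basis_imp_k_network:
  assumes opn: "\<And>N. N \<in> \<N> \<Longrightarrow> openin X N"
    and basis: "\<And>U x. openin X U \<Longrightarrow> x \<in> U \<Longrightarrow> \<exists>N\<in>\<N>. x \<in> N \<and> N \<subseteq> U"
  shows "k_network X \<N>"
  unfolding k_network_def
proof (intro conjI ballI allI impI)
  show "N \<subseteq> topspace X" if "N \<in> \<N>" for N
    using opn[OF that] by (rule openin_subset)
  fix K U assume KU: "compactin X K \<and> openin X U \<and> K \<subseteq> U"
  define \<U> where "\<U> = {N \<in> \<N>. N \<subseteq> U}"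
  have "K \<subseteq> \<Union>\<U>"
  proof
    fix x assume "x \<in> K"
    then obtain N where "N \<in> \<N>" "x \<in> N" "N \<subseteq> U"
      using basis KU by blast
    then show "x \<in> \<Union>\<U>"
      unfolding \<U>_def by blast
  qed
  moreover have "\<forall>N\<in>\<U>. openin X N"
    using opn unfolding \<U>_def by blast
  moreover have "compactin X K"
    using KU by blast
  ultimately obtain \<F> where "finite \<F>" "\<F> \<subseteq> \<U>" "K \<subseteq> \<Union>\<F>"
    unfolding compactin_def by blast
  then show "\<exists>\<F>. finite \<F> \<and> \<F> \<subseteq> \<N> \<and> K \<subseteq> \<Union>\<F> \<and> \<Union>\<F> \<subseteq> U"
    unfolding \<U>_def by blast
qed

lemma sigma_locally_finite_UN:
  fixes \<N> :: "nat \<Rightarrow> 'a set set"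
  assumes "\<And>m. sigma_locally_finite X (\<N> m)"
  shows "sigma_locally_finite X (\<Union>m. \<N> m)"
proof -
  have "\<forall>m. \<exists>\<F> :: nat \<Rightarrow> 'a set set. \<N> m = (\<Union>n. \<F> n) \<and> (\<forall>n. locally_finite_family X (\<F> n))"
    using assms unfolding sigma_locally_finite_def by blast
  from choice[OF this] obtain \<F> :: "nat \<Rightarrow> nat \<Rightarrow> 'a set set"
    where "\<forall>m. \<N> m = (\<Union>n. \<F> m n) \<and> (\<forall>n. locally_finite_family X (\<F> m n))"
    ..
  then have \<F>: "\<And>m. \<N> m = (\<Union>n. \<F> m n)" "\<And>m n. locally_finite_family X (\<F> m n)"
    by simp_all
  define \<G> where "\<G> k = case_prod \<F> (prod_decode k)" for k
  have "(\<Union>m. \<N> m) = (\<Union>k. \<G> k)"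
  proof (intro equalityI subsetI)
    fix A assume "A \<in> (\<Union>m. \<N> m)"
    then obtain m n where "A \<in> \<F> m n"
      unfolding \<F>(1) by blast
    then show "A \<in> (\<Union>k. \<G> k)"
      unfolding \<G>_def by (intro UN_I[of "prod_encode (m, n)"]) simp_all
  next
    fix A assume "A \<in> (\<Union>k. \<G> k)"
    then obtain k where "A \<in> \<G> k"
      by blast
    moreover obtain m n where "prod_decode k = (m, n)"
      by (cases "prod_decode k")
    ultimately have "A \<in> \<F> m n"
      unfolding \<G>_def by simp
    then show "A \<in> (\<Union>m. \<N> m)"
      unfolding \<F>(1) by blast
  qed
  moreover have "locally_finite_family X (\<G> k)" for k
    unfolding \<G>_def by (metis \<F>(2) case_prod_conv surj_pair)
  ultimately show ?thesis
    unfolding sigma_locally_finite_def by blast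
qed

lemma sigma_locally_finite_countable_adherent:
  fixes x :: "'a::topological_space"
  assumes "sigma_locally_finite euclidean \<N>"
  shows "countable {N \<in> \<N>. x \<in> closure N}"
proof -
  obtain \<F> :: "nat \<Rightarrow> 'a set set"
    where \<F>: "\<N> = (\<Union>n. \<F> n)" "\<And>n. locally_finite_family euclidean (\<F> n)"
    using assms unfolding sigma_locally_finite_def by blast
  have "finite {N \<in> \<F> n. x \<in> closure N}" for n
  proof -
    obtain W where W: "open W" "x \<in> W" "finite {N \<in> \<F> n. N \<inter> W \<noteq> {}}"
      using \<F>(2)[of n] unfolding locally_finite_family_def by auto
    have "N \<inter> W \<noteq> {}" if "x \<in> closure N" for N
      using W(1,2) that open_Int_closure_eq_empty[of W N] by (auto simp: Int_commute)
    then have "{N \<in> \<F> n. x \<in> closure N} \<subseteq> {N \<in> \<F> n. N \<inter> W \<noteq> {}}"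
      by blast
    then show ?thesis
      using W(3) by (rule finite_subset)
  qed
  moreover have "{N \<in> \<N>. x \<in> closure N} = (\<Union>n. {N \<in> \<F> n. x \<in> closure N})"
    unfolding \<F>(1) by blast
  ultimately show ?thesis
    by (simp add: countable_finite)
qed

lemma frequently_mem_imp_limit_in_closure:
  assumes "t \<longlonglongrightarrow> x" and "\<exists>\<^sub>F j in sequentially. t j \<in> N"
  shows "x \<in> closure N"
proof (rule ccontr)
  assume "x \<notin> closure N"
  then have "\<forall>\<^sub>F j in sequentially. t j \<in> - closure N"
    using assms(1) by (intro topological_tendstoD) auto
  then have "\<forall>\<^sub>F j in sequentially. t j \<notin> N"
    by (rule eventually_mono) (use closure_subset in blast)
  then show False
    using assms(2) by (simp add: not_frequently[symmetric])
qed

lemma k_network_frequently_mem: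
  fixes t :: "nat \<Rightarrow> 'a::topological_space"
  assumes kn: "k_network euclidean \<N>" and lim: "t \<longlonglongrightarrow> x" and U: "open U" "x \<in> U"
  shows "\<exists>N\<in>\<N>. N \<subseteq> U \<and> (\<exists>\<^sub>F j in sequentially. t j \<in> N)"
proof -
  obtain J where J: "\<And>j. j \<ge> J \<Longrightarrow> t j \<in> U"
    using topological_tendstoD[OF lim U] unfolding eventually_sequentially by blast
  define s where "s j = t (j + J)" for j
  have slim: "s \<longlonglongrightarrow> x"
    unfolding s_def using lim by (rule LIMSEQ_ignore_initial_segment)
  have "compactin euclidean (insert x (range s))"
    by (rule compactin_sequence_with_limit) (use slim in auto)
  moreover have "insert x (range s) \<subseteq> U"
    unfolding s_def using J U(2) by auto
  ultimately obtain \<F> where \<F>: "finite \<F>" "\<F> \<subseteq> \<N>" "range s \<subseteq> \<Union>\<F>" "\<Union>\<F> \<subseteq> U"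
    using kn U(1) unfolding k_network_def by (metis insert_subset open_openin)
  have "\<exists>N\<in>\<F>. infinite {j. s j \<in> N}"
  proof (rule ccontr)
    assume "\<not> ?thesis"
    then have "finite (\<Union>N\<in>\<F>. {j. s j \<in> N})"
      using \<F>(1) by auto
    moreover have "(\<Union>N\<in>\<F>. {j. s j \<in> N}) = UNIV"
      using \<F>(3) by blast
    ultimately show False
      by simp
  qed
  then obtain N where N: "N \<in> \<F>" "infinite {j. s j \<in> N}"
    by blast
  then have "\<exists>\<^sub>F j in sequentially. s j \<in> N"
    by (simp add: frequently_cofinite[symmetric] cofinite_eq_sequentially)
  then have "\<exists>\<^sub>F j in sequentially. t j \<in> N"
    unfolding s_def frequently_def using eventually_sequentially_seg[of "\<lambda>j. t j \<notin> N" J] by simp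
  then show ?thesis
    using N(1) \<F>(2,4) by blast
qed

lemma closed_singleton_if_t1_space:
  fixes x :: "'a::topological_space"
  assumes "t1_space (euclidean :: 'a topology)"
  shows "closed {x}"
  unfolding closed_closedin using closedin_t1_singleton[OF assms] by simp

lemma Frechet_Urysohn_space_euclideanD:
  fixes x :: "'a::topological_space"
  assumes "Frechet_Urysohn_space (euclidean :: 'a topology)" "x \<in> closure A"
  obtains t where "\<And>n. t n \<in> A" "t \<longlonglongrightarrow> x"
proof -
  have "\<exists>t. (\<forall>n. t n \<in> A) \<and> limitin euclidean t x sequentially"
    using assms unfolding Frechet_Urysohn_space_def euclidean_closure_of by simp
  then show ?thesis
    using that by auto
qed

lemma closure_Diff_closed_singleton:
  assumes "closed {p}" "x \<in> closure S" "x \<noteq> p"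
  shows "x \<in> closure (S - {p})"
proof -
  have "closure S \<subseteq> closure ((S - {p}) \<union> {p})"
    by (rule closure_mono) blast
  also have "\<dots> = closure (S - {p}) \<union> {p}"
    by (simp only: closure_Un closure_closed[OF assms(1)])
  finally show ?thesis
    using assms(2,3) by blast
qed

context Metric_space
begin

text \<open>Stone's construction: after well-ordering the centres by R, the core of the cell at s
  consists of the points of \<open>mball s r\<close> outside all earlier balls that lie \<open>3\<epsilon>\<close> deep inside
  \<open>mball s r\<close>.\<close>
definition stone_core :: "'a rel \<Rightarrow> real \<Rightarrow> real \<Rightarrow> 'a \<Rightarrow> 'a set" where
  "stone_core R r \<epsilon> s =
     {x \<in> mball s r. (\<forall>t. (t, s) \<in> R \<longrightarrow> x \<notin> mball t r) \<and> mball x (3 * \<epsilon>) \<subseteq> mball s r}"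

definition stone_cell :: "'a rel \<Rightarrow> real \<Rightarrow> real \<Rightarrow> 'a \<Rightarrow> 'a set" where
  "stone_cell R r \<epsilon> s = (\<Union>x\<in>stone_core R r \<epsilon> s. mball x \<epsilon>)"

lemma openin_stone_cell: "openin mtopology (stone_cell R r \<epsilon> s)"
  unfolding stone_cell_def by (rule openin_Union) auto

lemma stone_cell_subset_mball: "stone_cell R r \<epsilon> s \<subseteq> mball s r"
proof
  fix y assume "y \<in> stone_cell R r \<epsilon> s"
  then obtain x where x: "x \<in> stone_core R r \<epsilon> s" "y \<in> mball x \<epsilon>"
    unfolding stone_cell_def by blast
  then have "x \<in> M" "y \<in> M" "d x y < \<epsilon>"
    by auto
  moreover have "d x y < 3 * \<epsilon>"
    using \<open>d x y < \<epsilon>\<close> nonneg[of x y] by linarith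
  ultimately have "y \<in> mball x (3 * \<epsilon>)"
    by simp
  then show "y \<in> mball s r"
    using x(1) unfolding stone_core_def by blast
qed

lemma stone_cell_cover:
  assumes "wf R" "x \<in> M" "0 < r"
  shows "\<exists>s\<in>M. \<exists>\<epsilon>>0. \<forall>\<delta>. 0 < \<delta> \<and> \<delta> \<le> \<epsilon> \<longrightarrow> x \<in> stone_cell R r \<delta> s"
proof -
  define Q where "Q = {s \<in> M. x \<in> mball s r}"
  have "x \<in> Q"
    unfolding Q_def using assms(2,3) by simp
  then obtain s where "s \<in> Q" and first: "\<And>t. (t, s) \<in> R \<Longrightarrow> t \<notin> Q"
    using wfE_min[OF assms(1)] by blast
  then have s: "s \<in> M" "x \<in> mball s r" and first: "\<And>t. (t, s) \<in> R \<Longrightarrow> x \<notin> mball t r"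
    unfolding Q_def by auto
  obtain e where "e > 0" and e: "mball x e \<subseteq> mball s r"
    using s(2) openin_mball openin_mtopology by blast
  have "x \<in> stone_cell R r \<delta> s" if "0 < \<delta>" "\<delta> \<le> e / 3" for \<delta>
  proof -
    have "mball x (3 * \<delta>) \<subseteq> mball s r"
      using that e mball_subset_concentric[of "3 * \<delta>" e x] by simp
    then have "x \<in> stone_core R r \<delta> s"
      unfolding stone_core_def using s(2) first by blast
    then show ?thesis
      unfolding stone_cell_def using that assms(2) by force
  qed
  then show ?thesis
    using s(1) \<open>e > 0\<close> by (intro bexI[of _ s] exI[of _ "e / 3"]) auto
qed

text \<open>A core point of the later centre avoids the ball around the earlier centre, into which
  the \<open>3\<epsilon>\<close>-ball around the earlier core point fits; so core points of different cells are
  \<open>3\<epsilon>\<close> apart.\<close>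
lemma stone_cells_eq:
  assumes "total R"
    and a: "a \<in> stone_cell R r \<epsilon> s" and b: "b \<in> stone_cell R r \<epsilon> t" and ab: "d a b < \<epsilon>"
  shows "stone_cell R r \<epsilon> s = stone_cell R r \<epsilon> t"
proof -
  obtain x where x: "x \<in> stone_core R r \<epsilon> s" "a \<in> mball x \<epsilon>"
    using a unfolding stone_cell_def by blast
  obtain y where y: "y \<in> stone_core R r \<epsilon> t" "b \<in> mball y \<epsilon>"
    using b unfolding stone_cell_def by blast
  have "d x y \<le> d x a + d a b + d b y"
    using x y triangle[of x a y] triangle[of a b y] by auto
  then have "d x y < 3 * \<epsilon>"
    using x(2) y(2) ab by (simp add: commute)
  then have xy: "y \<in> mball x (3 * \<epsilon>)" "x \<in> mball y (3 * \<epsilon>)"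
    using x(2) y(2) by (auto simp: commute)
  have "s = t"
  proof (rule ccontr)
    assume "s \<noteq> t"
    then have "(s, t) \<in> R \<or> (t, s) \<in> R"
      using assms(1) unfolding total_on_def by blast
    then show False
      using x(1) y(1) xy unfolding stone_core_def by blast
  qed
  then show ?thesis
    by simp
qed

lemma locally_finite_stone_cells:
  assumes "total R" "0 < \<epsilon>"
  shows "locally_finite_family mtopology (stone_cell R r \<epsilon> ` M)"
  unfolding locally_finite_family_def
proof
  fix z assume "z \<in> topspace mtopology"
  then have z: "z \<in> mball z (\<epsilon> / 2)"
    using assms(2) by simp
  define \<A> where "\<A> = {A \<in> stone_cell R r \<epsilon> ` M. A \<inter> mball z (\<epsilon> / 2) \<noteq> {}}"
  have single: "A = B" if A: "A \<in> \<A>" and B: "B \<in> \<A>" for A B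
  proof -
    obtain s a where "A = stone_cell R r \<epsilon> s" "a \<in> A" "a \<in> mball z (\<epsilon> / 2)"
      using A unfolding \<A>_def by blast
    moreover obtain t b where "B = stone_cell R r \<epsilon> t" "b \<in> B" "b \<in> mball z (\<epsilon> / 2)"
      using B unfolding \<A>_def by blast
    moreover have "d a b < \<epsilon>"
      using calculation triangle[of a z b] commute[of a z] by auto
    ultimately show "A = B"
      using stone_cells_eq[OF assms(1)] by blast
  qed
  have "finite \<A>"
  proof (cases "\<A> = {}")
    case False
    then obtain A where "A \<in> \<A>"
      by blast
    then have "\<A> \<subseteq> {A}"
      using single by blast
    then show ?thesis
      using finite_subset by blast
  qed simp
  moreover have "openin mtopology (mball z (\<epsilon> / 2))"
    by simp
  ultimately show "\<exists>U. openin mtopology U \<and> z \<in> U \<and> finite {A \<in> stone_cell R r \<epsilon> ` M. A \<inter> U \<noteq> {}}"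
    using z unfolding \<A>_def by blast
qed

lemma sigma_locally_finite_mball_refinement:
  assumes "0 < r"
  shows "\<exists>\<V>. sigma_locally_finite mtopology \<V> \<and> (\<forall>V\<in>\<V>. openin mtopology V \<and> (\<exists>s\<in>M. V \<subseteq> mball s r))
             \<and> M \<subseteq> \<Union>\<V>"
proof -
  obtain w :: "'a rel" where w: "Well_order w" "Field w = UNIV"
    using well_ordering by (elim exE conjE)
  define R where "R = w - Id"
  have R: "wf R" "total R"
    using w unfolding R_def well_order_on_def linear_order_on_def total_on_def by auto
  define \<V> where "\<V> = (\<Union>n. stone_cell R r ((1/2) ^ n) ` M)"
  have "M \<subseteq> \<Union>\<V>"
  proof
    fix x assume "x \<in> M"
    then obtain s \<epsilon> where s: "s \<in> M" "\<epsilon> > 0" "\<And>\<delta>. 0 < \<delta> \<Longrightarrow> \<delta> \<le> \<epsilon> \<Longrightarrow> x \<in> stone_cell R r \<delta> s"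
      using stone_cell_cover[OF R(1) _ assms] by blast
    obtain n where "(1/2::real) ^ n < \<epsilon>"
      using real_arch_pow_inv[OF s(2), of "1/2"] by auto
    then have "x \<in> stone_cell R r ((1/2) ^ n) s"
      using s(2,3) by simp
    then show "x \<in> \<Union>\<V>"
      unfolding \<V>_def using s(1) by blast
  qed
  moreover have "sigma_locally_finite mtopology \<V>"
    unfolding \<V>_def sigma_locally_finite_def
    by (intro exI[of _ "\<lambda>n. stone_cell R r ((1/2) ^ n) ` M"]) (simp add: locally_finite_stone_cells R(2))
  moreover have "openin mtopology V \<and> (\<exists>s\<in>M. V \<subseteq> mball s r)" if "V \<in> \<V>" for V
    using that openin_stone_cell stone_cell_subset_mball unfolding \<V>_def by blast
  ultimately show ?thesis
    by blast
qed

lemma sigma_locally_finite_open_basis: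
  "\<exists>\<N>. sigma_locally_finite mtopology \<N> \<and> (\<forall>N\<in>\<N>. openin mtopology N) \<and>
       (\<forall>U x. openin mtopology U \<and> x \<in> U \<longrightarrow> (\<exists>N\<in>\<N>. x \<in> N \<and> N \<subseteq> U))"
proof -
  have "\<forall>m. \<exists>\<V>. sigma_locally_finite mtopology \<V> \<and>
          (\<forall>V\<in>\<V>. openin mtopology V \<and> (\<exists>s\<in>M. V \<subseteq> mball s ((1/2) ^ m))) \<and> M \<subseteq> \<Union>\<V>"
    by (simp add: sigma_locally_finite_mball_refinement)
  from choice[OF this] obtain \<V> where "\<forall>m. sigma_locally_finite mtopology (\<V> m) \<and>
          (\<forall>V\<in>\<V> m. openin mtopology V \<and> (\<exists>s\<in>M. V \<subseteq> mball s ((1/2) ^ m))) \<and> M \<subseteq> \<Union>(\<V> m)"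
    ..
  then have \<V>: "\<And>m. sigma_locally_finite mtopology (\<V> m)"
    "\<And>m V. V \<in> \<V> m \<Longrightarrow> openin mtopology V \<and> (\<exists>s\<in>M. V \<subseteq> mball s ((1/2) ^ m))"
    "\<And>m. M \<subseteq> \<Union>(\<V> m)"
    by blast+
  have "\<exists>N\<in>(\<Union>m. \<V> m). x \<in> N \<and> N \<subseteq> U" if U: "openin mtopology U" "x \<in> U" for U x
  proof -
    obtain e where "e > 0" and e: "mball x e \<subseteq> U"
      using U openin_mtopology by blast
    obtain m where m: "(1/2::real) ^ m < e / 2"
      using real_arch_pow_inv[of "e / 2" "1/2"] \<open>e > 0\<close> by auto
    have "x \<in> M"
      using U openin_subset by fastforce
    then obtain V where V: "V \<in> \<V> m" "x \<in> V"
      using \<V>(3) by blast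
    then obtain s where s: "s \<in> M" "V \<subseteq> mball s ((1/2) ^ m)"
      using \<V>(2) by blast
    have "V \<subseteq> mball x e"
    proof
      fix y assume "y \<in> V"
      then have "d s x < (1/2) ^ m" "d s y < (1/2) ^ m" "y \<in> M"
        using V(2) s(2) by auto
      then show "y \<in> mball x e"
        using triangle[of x s y] commute[of x s] \<open>x \<in> M\<close> s(1) m by simp
    qed
    then show ?thesis
      using V e by blast
  qed
  moreover have "sigma_locally_finite mtopology (\<Union>m. \<V> m)"
    using \<V>(1) by (rule sigma_locally_finite_UN)
  moreover have "\<forall>N\<in>(\<Union>m. \<V> m). openin mtopology N"
    using \<V>(2) by blast
  ultimately show ?thesis
    by (intro exI[of _ "\<Union>m. \<V> m"]) blast
qed

end

lemma metrizable_imp_Frechet_Urysohn_space: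
  assumes "metrizable_space X"
  shows "Frechet_Urysohn_space X"
proof -
  obtain M d where "Metric_space M d" and X: "X = Metric_space.mtopology M d"
    using assms unfolding metrizable_space_def by blast
  then interpret Metric_space M d
    by simp
  show ?thesis
    unfolding Frechet_Urysohn_space_def X closure_of_sequentially by blast
qed

lemma metrizable_imp_aleph_space:
  assumes "metrizable_space X"
  shows "aleph_space X"
proof -
  obtain M d where "Metric_space M d" and X: "X = Metric_space.mtopology M d"
    using assms unfolding metrizable_space_def by blast
  then interpret Metric_space M d
    by simp
  obtain \<N> where "sigma_locally_finite mtopology \<N>" "\<forall>N\<in>\<N>. openin mtopology N"
    "\<forall>U x. openin mtopology U \<and> x \<in> U \<longrightarrow> (\<exists>N\<in>\<N>. x \<in> N \<and> N \<subseteq> U)"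
    using sigma_locally_finite_open_basis by blast
  moreover from this have "k_network mtopology \<N>"
    by (intro open_basis_imp_k_network) blast+
  ultimately show ?thesis
    unfolding aleph_space_def X
    using metrizable_imp_regular_space metrizable_imp_t1_space metrizable_space_mtopology by blast
qed

definition cs_star_network_at :: "'a::topological_space \<Rightarrow> 'a set set \<Rightarrow> bool" where
  "cs_star_network_at x \<C> \<longleftrightarrow>
     (\<forall>t U. t \<longlonglongrightarrow> x \<and> open U \<and> x \<in> U \<longrightarrow> (\<exists>N\<in>\<C>. N \<subseteq> U \<and> (\<exists>\<^sub>F j in sequentially. t j \<in> N)))"

lemma aleph_space_imp_countable_cs_star_network:
  fixes x :: "'a::topological_space"
  assumes "aleph_space (euclidean :: 'a topology)"
  shows "\<exists>\<C>. countable \<C> \<and> cs_star_network_at x \<C>"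
proof -
  obtain \<N> :: "'a set set" where kn: "k_network euclidean \<N>" and slf: "sigma_locally_finite euclidean \<N>"
    using assms unfolding aleph_space_def by blast
  have "cs_star_network_at x {N \<in> \<N>. x \<in> closure N}"
    unfolding cs_star_network_at_def
  proof (intro allI impI)
    fix t U assume tU: "t \<longlonglongrightarrow> x \<and> open U \<and> x \<in> U"
    then obtain N where "N \<in> \<N>" "N \<subseteq> U" "\<exists>\<^sub>F j in sequentially. t j \<in> N"
      using k_network_frequently_mem[OF kn] by blast
    then show "\<exists>N\<in>{N \<in> \<N>. x \<in> closure N}. N \<subseteq> U \<and> (\<exists>\<^sub>F j in sequentially. t j \<in> N)"
      using tU frequently_mem_imp_limit_in_closure by blast
  qed
  then show ?thesis
    using sigma_locally_finite_countable_adherent[OF slf] by blast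
qed

lemma open_vimage_translation:
  fixes a :: "'a::topological_group_add"
  assumes "open S"
  shows "open ((\<lambda>x. a + x) -` S)"
proof -
  have "continuous_on UNIV (\<lambda>x. a + x)"
    by (intro continuous_intros)
  then show ?thesis
    using assms continuous_on_open_vimage[OF open_UNIV] by auto
qed

lemma nhds_zero_add_subset:
  fixes W :: "'a::topological_group_add set"
  assumes "open W" "0 \<in> W"
  obtains V where "open V" "0 \<in> V" "\<And>a b. a \<in> V \<Longrightarrow> b \<in> V \<Longrightarrow> a + b \<in> W"
proof -
  have "((\<lambda>x. fst x + snd x) \<longlongrightarrow> (0::'a) + 0) (nhds 0 \<times>\<^sub>F nhds 0)"
    by (rule tendsto_add_Pair)
  then have "\<forall>\<^sub>F x in nhds 0 \<times>\<^sub>F nhds 0. fst x + snd x \<in> W"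
    using assms by (simp add: topological_tendstoD)
  then obtain P Q where P: "eventually P (nhds (0::'a))" and Q: "eventually Q (nhds (0::'a))"
    and PQ: "\<And>x y. P x \<Longrightarrow> Q y \<Longrightarrow> x + y \<in> W"
    unfolding eventually_prod_filter by force
  obtain A where "open A" "0 \<in> A" "\<forall>x\<in>A. P x"
    using P unfolding eventually_nhds by blast
  moreover obtain B where "open B" "0 \<in> B" "\<forall>x\<in>B. Q x"
    using Q unfolding eventually_nhds by blast
  ultimately show ?thesis
    using PQ by (intro that[of "A \<inter> B"]) auto
qed

lemma nhds_zero_symmetric_triple_sum_subset:
  fixes U :: "'a::topological_group_add set"
  assumes "open U" "0 \<in> U"
  obtains W where "open W" "0 \<in> W" "\<And>x. x \<in> W \<Longrightarrow> -x \<in> W"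
    "\<And>a b c. a \<in> W \<Longrightarrow> b \<in> W \<Longrightarrow> c \<in> W \<Longrightarrow> a + b + c \<in> U"
proof -
  obtain V1 where V1: "open V1" "0 \<in> V1" "\<And>a b. a \<in> V1 \<Longrightarrow> b \<in> V1 \<Longrightarrow> a + b \<in> U"
    using nhds_zero_add_subset[OF assms] by blast
  obtain V2 where V2: "open V2" "0 \<in> V2" "\<And>a b. a \<in> V2 \<Longrightarrow> b \<in> V2 \<Longrightarrow> a + b \<in> V1"
    using nhds_zero_add_subset[OF V1(1,2)] by blast
  have "V2 \<subseteq> V1"
  proof
    fix x assume "x \<in> V2"
    then have "x + 0 \<in> V1"
      using V2(2,3) by blast
    then show "x \<in> V1"
      by simp
  qed
  define W where "W = V2 \<inter> uminus -` V2"
  have "continuous_on UNIV (uminus :: 'a \<Rightarrow> 'a)"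
    by (intro continuous_intros)
  then have "open (uminus -` V2)"
    using V2(1) continuous_on_open_vimage[OF open_UNIV] by auto
  then have "open W"
    unfolding W_def using V2(1) by blast
  moreover have "0 \<in> W" "\<And>x. x \<in> W \<Longrightarrow> -x \<in> W"
    unfolding W_def using V2(2) by auto
  moreover have "a + b + c \<in> U" if "a \<in> W" "b \<in> W" "c \<in> W" for a b c
  proof -
    have "a + b \<in> V1" "c \<in> V1"
      using that V2(3) \<open>V2 \<subseteq> V1\<close> unfolding W_def by auto
    then show ?thesis
      by (rule V1(3))
  qed
  ultimately show ?thesis
    by (rule that)
qed

text \<open>The sets \<open>{y n} \<union> {y n + s n m | m}\<close> are compact and miss 0, so a sequence from their
  union converging to 0 meets each of the first N of them only finitely often.\<close>
lemma Frechet_Urysohn_group_diagonal: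
  fixes y :: "nat \<Rightarrow> 'a::topological_group_add" and s :: "nat \<Rightarrow> nat \<Rightarrow> 'a"
  assumes FU: "Frechet_Urysohn_space (euclidean :: 'a topology)"
    and T2: "Hausdorff_space (euclidean :: 'a topology)"
    and y: "y \<longlonglongrightarrow> 0" "\<And>n. y n \<noteq> 0"
    and s: "\<And>n. s n \<longlonglongrightarrow> 0" "\<And>n m. y n + s n m \<noteq> 0"
  obtains n m :: "nat \<Rightarrow> nat"
  where "filterlim n at_top sequentially" "(\<lambda>j. s (n j) (m j)) \<longlonglongrightarrow> 0"
proof -
  define A where "A = {y n + s n m | n m. True}"
  have "0 \<in> closure A"
    unfolding closure_iff_nhds_not_empty
  proof (intro allI impI)
    fix T S :: "'a set" assume ST: "S \<subseteq> T" "open S" "0 \<in> S"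
    obtain W where W: "open W" "0 \<in> W" "\<And>a b. a \<in> W \<Longrightarrow> b \<in> W \<Longrightarrow> a + b \<in> S"
      using nhds_zero_add_subset[OF ST(2,3)] by blast
    obtain n where "y n \<in> W"
      using topological_tendstoD[OF y(1) W(1,2)] by (metis eventually_sequentially order_refl)
    moreover obtain m where "s n m \<in> W"
      using topological_tendstoD[OF s(1) W(1,2)] by (metis eventually_sequentially order_refl)
    ultimately have "y n + s n m \<in> A \<inter> T"
      using W(3) ST(1) unfolding A_def by blast
    then show "A \<inter> T \<noteq> {}"
      by blast
  qed
  then obtain z where zA: "\<And>j. z j \<in> A" and zlim: "z \<longlonglongrightarrow> 0"
    using Frechet_Urysohn_space_euclideanD[OF FU] by blast
  have "\<forall>j. \<exists>nm. z j = y (fst nm) + s (fst nm) (snd nm)"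
    using zA unfolding A_def by fastforce
  then obtain nm where z: "\<And>j. z j = y (fst (nm j)) + s (fst (nm j)) (snd (nm j))"
    by metis
  define n where "n j = fst (nm j)" for j
  define m where "m j = snd (nm j)" for j
  have zj: "z j = y (n j) + s (n j) (m j)" for j
    unfolding z n_def m_def ..
  have "filterlim n at_top sequentially"
    unfolding filterlim_at_top
  proof
    fix N
    define C where "C = (\<Union>k<N. insert (y k) (range (\<lambda>i. y k + s k i)))"
    have "compactin euclidean (insert (y k) (range (\<lambda>i. y k + s k i)))" for k
    proof (rule compactin_sequence_with_limit)
      have "(\<lambda>i. y k + s k i) \<longlonglongrightarrow> y k + 0"
        by (intro tendsto_intros s(1))
      then show "limitin euclidean (\<lambda>i. y k + s k i) (y k) sequentially"
        by simp
    qed auto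
    then have "closedin euclidean C"
      unfolding C_def by (intro compactin_imp_closedin T2 compactin_Union) auto
    then have "open (- C)"
      by (simp add: open_Compl)
    moreover have "0 \<notin> C"
      unfolding C_def using y(2) s(2) by auto
    ultimately have "\<forall>\<^sub>F j in sequentially. z j \<in> - C"
      using zlim by (intro topological_tendstoD) auto
    then show "\<forall>\<^sub>F j in sequentially. N \<le> n j"
    proof (rule eventually_mono)
      fix j assume "z j \<in> - C"
      show "N \<le> n j"
      proof (rule ccontr)
        assume "\<not> N \<le> n j"
        moreover have "z j \<in> insert (y (n j)) (range (\<lambda>i. y (n j) + s (n j) i))"
          unfolding zj by blast
        ultimately have "z j \<in> C"
          unfolding C_def by auto
        then show False
          using \<open>z j \<in> - C\<close> by simp
      qed
    qed
  qed
  moreover have "(\<lambda>j. s (n j) (m j)) \<longlonglongrightarrow> 0"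
  proof -
    have "(\<lambda>j. y (n j)) \<longlonglongrightarrow> 0"
      using filterlim_compose[OF y(1) \<open>filterlim n at_top sequentially\<close>] .
    then have "(\<lambda>j. - y (n j) + z j) \<longlonglongrightarrow> - 0 + 0"
      by (intro tendsto_intros zlim)
    moreover have "- y (n j) + z j = s (n j) (m j)" for j
      unfolding zj by (simp add: add.assoc[symmetric])
    ultimately show ?thesis
      by simp
  qed
  ultimately show ?thesis
    by (rule that)
qed

text \<open>Otherwise choose sequences \<open>s n\<close> converging to 0 outside \<open>D n\<close>; their diagonal
  sequence converges to 0 but enters each member \<open>f k \<subseteq> U\<close> only at indices \<open>n j < k\<close>,
  i.e. finitely often, contradicting the cs*-property.\<close>
lemma Frechet_Urysohn_group_nhds_finite_union:
  fixes f :: "nat \<Rightarrow> 'a::topological_group_add set" and y :: "nat \<Rightarrow> 'a"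
  assumes FU: "Frechet_Urysohn_space (euclidean :: 'a topology)"
    and T2: "Hausdorff_space (euclidean :: 'a topology)"
    and y: "y \<longlonglongrightarrow> 0" "\<And>n. y n \<noteq> 0"
    and cs: "cs_star_network_at 0 (range f)"
    and U: "open U" "0 \<in> U"
  shows "\<exists>n. 0 \<in> interior (insert 0 (\<Union>(f ` {i. i \<le> n \<and> f i \<subseteq> U})))"
proof (rule ccontr)
  define D where "D n = insert 0 (\<Union>(f ` {i. i \<le> n \<and> f i \<subseteq> U}))" for n
  assume "\<not> ?thesis"
  then have "0 \<in> closure (- D n)" for n
    unfolding D_def by (simp add: closure_complement)
  then have "0 \<in> closure (- D n - {- y n})" for n
    using closure_Diff_closed_singleton closed_singleton_if_t1_space[OF Hausdorff_imp_t1_space[OF T2]] y(2)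
    by (metis neg_0_equal_iff_equal)
  then have "\<forall>n. \<exists>\<sigma>. (\<forall>m. \<sigma> m \<in> - D n - {- y n}) \<and> \<sigma> \<longlonglongrightarrow> 0"
    using Frechet_Urysohn_space_euclideanD[OF FU] by metis
  then obtain s where s: "\<And>n m. s n m \<notin> D n" "\<And>n m. s n m \<noteq> - y n" and slim: "\<And>n. s n \<longlonglongrightarrow> 0"
    by (metis Diff_iff ComplD singletonI)
  have "y n + s n m \<noteq> 0" for n m
    using s(2)[of n m] by (metis add.inverse_unique)
  then obtain n m where n: "filterlim n at_top sequentially"
    and tlim: "(\<lambda>j. s (n j) (m j)) \<longlonglongrightarrow> 0"
    using Frechet_Urysohn_group_diagonal[where s = s, OF FU T2 y slim] by blast
  obtain k where k: "f k \<subseteq> U" "\<exists>\<^sub>F j in sequentially. s (n j) (m j) \<in> f k"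
    using cs tlim U unfolding cs_star_network_at_def by blast
  have "\<forall>\<^sub>F j in sequentially. k \<le> n j"
    using n unfolding filterlim_at_top by blast
  with k(2) have "\<exists>\<^sub>F j in sequentially. s (n j) (m j) \<in> f k \<and> k \<le> n j"
    by (rule frequently_rev_mp[OF _ eventually_mono]) auto
  then obtain j where "s (n j) (m j) \<in> f k" "k \<le> n j"
    by (auto dest: frequently_ex)
  then have "s (n j) (m j) \<in> D (n j)"
    unfolding D_def using k(1) by blast
  then show False
    using s(1) by blast
qed

lemma Frechet_Urysohn_group_countable_nhds_base:
  fixes \<C> :: "'a::topological_group_add set set"
  assumes FU: "Frechet_Urysohn_space (euclidean :: 'a topology)"
    and T2: "Hausdorff_space (euclidean :: 'a topology)"
    and \<C>: "countable \<C>" "cs_star_network_at 0 \<C>"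
  shows "\<exists>\<B> :: 'a set set. countable \<B> \<and> (\<forall>V\<in>\<B>. open V \<and> 0 \<in> V) \<and> (\<forall>U. open U \<and> 0 \<in> U \<longrightarrow> (\<exists>V\<in>\<B>. V \<subseteq> U))"
proof (cases "open {0::'a}")
  case True
  show ?thesis
    by (rule exI[of _ "{{0::'a}}"]) (auto simp: True)
next
  case False
  have "interior {0::'a} \<noteq> {0}"
    using False interior_eq by metis
  then have "0 \<in> closure (- {0::'a})"
    using interior_subset[of "{0::'a}"] by (auto simp: closure_complement)
  then obtain y :: "nat \<Rightarrow> 'a" where y: "\<And>n. y n \<in> - {0}" "y \<longlonglongrightarrow> 0"
    using Frechet_Urysohn_space_euclideanD[OF FU] by blast
  then have y_ne: "\<And>n. y n \<noteq> 0"
    by simp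
  have "\<C> \<noteq> {}"
    using \<C>(2) unfolding cs_star_network_at_def by (metis empty_iff open_UNIV tendsto_const UNIV_I)
  define f where "f = from_nat_into \<C>"
  have cs: "cs_star_network_at 0 (range f)"
    unfolding f_def range_from_nat_into[OF \<open>\<C> \<noteq> {}\<close> \<C>(1)] by (rule \<C>(2))
  define W where "W I = interior (insert 0 (\<Union>(f ` I)))" for I
  define \<B> where "\<B> = {W I | I. finite I \<and> 0 \<in> W I}"
  have "\<B> \<subseteq> W ` {I. finite I}"
    unfolding \<B>_def by blast
  then have "countable \<B>"
    using countable_Collect_finite countable_image countable_subset by metis
  moreover have "\<forall>V\<in>\<B>. open V \<and> 0 \<in> V"
    unfolding \<B>_def W_def by auto
  moreover have "\<forall>U. open U \<and> 0 \<in> U \<longrightarrow> (\<exists>V\<in>\<B>. V \<subseteq> U)"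
  proof (intro allI impI)
    fix U :: "'a set" assume U: "open U \<and> 0 \<in> U"
    obtain n where n: "0 \<in> W {i. i \<le> n \<and> f i \<subseteq> U}"
      using Frechet_Urysohn_group_nhds_finite_union[OF FU T2 y(2) y_ne cs, of U] U
      unfolding W_def by blast
    have "finite {i. i \<le> n \<and> f i \<subseteq> U}"
      by (rule finite_subset[of _ "{..n}"]) auto
    then have "W {i. i \<le> n \<and> f i \<subseteq> U} \<in> \<B>"
      unfolding \<B>_def using n by blast
    moreover have "insert 0 (\<Union>(f ` {i. i \<le> n \<and> f i \<subseteq> U})) \<subseteq> U"
      using U by blast
    then have "W {i. i \<le> n \<and> f i \<subseteq> U} \<subseteq> U"
      unfolding W_def by (rule order_trans[OF interior_subset])
    ultimately show "\<exists>V\<in>\<B>. V \<subseteq> U"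
      by blast
  qed
  ultimately show ?thesis
    by blast
qed

lemma sum_list_threshold_split:
  fixes w :: "'b \<Rightarrow> real"
  assumes "\<And>x. 0 \<le> w x" "0 \<le> c" "c < sum_list (map w xs)"
  shows "\<exists>as z bs. xs = as @ z # bs \<and> sum_list (map w as) \<le> c \<and> c < sum_list (map w as) + w z"
  using assms(2,3)
proof (induction xs arbitrary: c)
  case (Cons x xs)
  show ?case
  proof (cases "c < w x")
    case True
    then show ?thesis
      using Cons.prems(1) by (intro exI[of _ "[]"]) auto
  next
    case False
    then obtain as z bs where "xs = as @ z # bs" "sum_list (map w as) \<le> c - w x"
      "c - w x < sum_list (map w as) + w z"
      using Cons.IH[of "c - w x"] Cons.prems(2) by auto
    then show ?thesis
      by (intro exI[of _ "x # as"]) auto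
  qed
qed simp

lemma power_half_bracket:
  fixes a :: real
  assumes "0 < a" "a < 1"
  obtains n where "(1/2) ^ Suc n \<le> a" "a < (1/2) ^ n"
proof -
  obtain k where "(1/2::real) ^ k < a"
    using real_arch_pow_inv[OF assms(1), of "1/2"] by auto
  then have "\<exists>k. (1/2::real) ^ k \<le> a"
    by (blast intro: less_imp_le)
  then obtain n where "\<not> (1/2::real) ^ n \<le> a" "(1/2) ^ Suc n \<le> a"
    using exists_least_lemma[of "\<lambda>k. (1/2::real) ^ k \<le> a"] assms(2) by auto
  then show ?thesis
    using that by simp
qed

locale metrizing_nhds_sequence =
  fixes V :: "nat \<Rightarrow> 'a::topological_group_add set"
  assumes open_nhd: "\<And>n. open (V n)"
    and nhd_0_eq_UNIV: "V 0 = UNIV"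
    and zero_in_nhd: "\<And>n. 0 \<in> V n"
    and uminus_in_nhd: "\<And>n x. x \<in> V n \<Longrightarrow> -x \<in> V n"
    and triple_sum_in_nhd: "\<And>n a b c. a \<in> V (Suc n) \<Longrightarrow> b \<in> V (Suc n) \<Longrightarrow> c \<in> V (Suc n) \<Longrightarrow> a + b + c \<in> V n"
    and nhds_Inter: "\<And>x. (\<And>n. x \<in> V n) \<Longrightarrow> x = 0"
    and nhds_basis: "\<And>U. open U \<Longrightarrow> 0 \<in> U \<Longrightarrow> \<exists>n. V n \<subseteq> U"
begin

lemma nhd_antimono: "m \<le> n \<Longrightarrow> V n \<subseteq> V m"
proof (rule lift_Suc_antimono_le)
  show "V (Suc k) \<subseteq> V k" for k
  proof
    fix x assume "x \<in> V (Suc k)"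
    then have "x + 0 + 0 \<in> V k"
      using zero_in_nhd by (intro triple_sum_in_nhd)
    then show "x \<in> V k"
      by simp
  qed
qed

definition prenorm :: "'a \<Rightarrow> real" where
  "prenorm z = (if \<forall>n. z \<in> V n then 0 else 2 * (1/2) ^ (LEAST n. z \<notin> V n))"

lemma prenorm_nonneg: "0 \<le> prenorm z"
  by (simp add: prenorm_def)

lemma prenorm_le_if_mem:
  assumes "z \<in> V n"
  shows "prenorm z \<le> (1/2) ^ n"
proof (cases "\<forall>n. z \<in> V n")
  case False
  then have "z \<notin> V (LEAST n. z \<notin> V n)"
    by (metis LeastI)
  then have "n < (LEAST n. z \<notin> V n)"
    using assms nhd_antimono by (meson not_le subsetD)
  then have "(1/2::real) ^ (LEAST n. z \<notin> V n) \<le> (1/2) ^ Suc n"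
    by (intro power_decreasing) auto
  then show ?thesis
    using False by (simp add: prenorm_def)
qed (simp add: prenorm_def)

lemma mem_if_prenorm_less:
  assumes "prenorm z < (1/2) ^ n"
  shows "z \<in> V (Suc n)"
proof (cases "\<forall>n. z \<in> V n")
  case False
  then have "prenorm z = 2 * (1/2) ^ (LEAST n. z \<notin> V n)"
    unfolding prenorm_def by (rule if_not_P)
  moreover have "(1/2::real) ^ Suc n = (1/2) ^ n / 2"
    by simp
  ultimately have "(1/2::real) ^ (LEAST n. z \<notin> V n) < (1/2) ^ Suc n"
    using assms by linarith
  then have "Suc n < (LEAST n. z \<notin> V n)"
    by (rule power_strict_decreasing_iff[THEN iffD1, rotated 2]) auto
  then show ?thesis
    using not_less_Least by blast
qed simp

lemma sum_list_prenorm_nonneg: "0 \<le> sum_list (map prenorm zs)"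
  by (induction zs) (simp_all add: prenorm_nonneg)

lemma prenorm_le_1: "prenorm z \<le> 1"
  using prenorm_le_if_mem[of z 0] nhd_0_eq_UNIV by simp

lemma prenorm_zero [simp]: "prenorm 0 = 0"
  using zero_in_nhd by (simp add: prenorm_def)

lemma prenorm_uminus [simp]: "prenorm (- z) = prenorm z"
proof -
  have "- z \<in> V n \<longleftrightarrow> z \<in> V n" for n
    using uminus_in_nhd by force
  then show ?thesis
    by (simp add: prenorm_def)
qed

lemma prenorm_eq_0_iff [simp]: "prenorm z = 0 \<longleftrightarrow> z = 0"
proof
  assume "prenorm z = 0"
  then have "z \<in> V (Suc n)" for n
    by (intro mem_if_prenorm_less) simp
  then have "z \<in> V n" for n
    using nhd_antimono[of n "Suc n"] by auto
  then show "z = 0"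
    by (rule nhds_Inter)
qed simp

text \<open>Cut the chain where its weight passes half of the total a: both remaining pieces and the
  cut element have prenorm below \<open>(1/2) ^ n\<close> for \<open>(1/2) ^ Suc n \<le> a\<close>, hence lie in
  \<open>V (Suc n)\<close>, and their sum lies in \<open>V n\<close>.\<close>
lemma prenorm_sum_list_le: "prenorm (sum_list zs) \<le> 2 * sum_list (map prenorm zs)"
proof (induction zs rule: length_induct)
  case (1 zs)
  define a where "a = sum_list (map prenorm zs)"
  have "0 \<le> a"
    unfolding a_def by (rule sum_list_prenorm_nonneg)
  consider "a = 0" | "1/2 \<le> a" | "0 < a" "a < 1/2"
    using \<open>0 \<le> a\<close> by linarith
  then show ?case
  proof cases
    case 1
    then have "\<forall>z\<in>set zs. z = 0"
      using sum_list_nonneg_eq_0_iff[of "map prenorm zs"] prenorm_nonneg unfolding a_def by auto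
    then have "sum_list zs = 0"
      by (induction zs) auto
    then show ?thesis
      by (simp add: sum_list_prenorm_nonneg)
  next
    case 2
    then show ?thesis
      using prenorm_le_1[of "sum_list zs"] unfolding a_def by simp
  next
    case 3
    obtain n where n: "(1/2) ^ Suc n \<le> a" "a < (1/2) ^ n"
      using power_half_bracket[of a] 3 by auto
    obtain as z bs where split: "zs = as @ z # bs"
      and as: "sum_list (map prenorm as) \<le> a / 2" and z: "a / 2 < sum_list (map prenorm as) + prenorm z"
      using sum_list_threshold_split[of prenorm "a / 2" zs] prenorm_nonneg 3 unfolding a_def by auto
    have a_split: "a = sum_list (map prenorm as) + prenorm z + sum_list (map prenorm bs)"
      unfolding a_def split by simp
    have "prenorm (sum_list as) \<le> 2 * sum_list (map prenorm as)"
      using "1.IH" split by auto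
    then have as_in: "sum_list as \<in> V (Suc n)"
      using as n(2) by (intro mem_if_prenorm_less) linarith
    have "prenorm (sum_list bs) \<le> 2 * sum_list (map prenorm bs)"
      using "1.IH" split by auto
    then have bs_in: "sum_list bs \<in> V (Suc n)"
      using a_split z n(2) by (intro mem_if_prenorm_less) linarith
    have z_in: "z \<in> V (Suc n)"
      using a_split n(2) sum_list_prenorm_nonneg[of as] sum_list_prenorm_nonneg[of bs]
      by (intro mem_if_prenorm_less) linarith
    have "sum_list as + z + sum_list bs \<in> V n"
      using as_in z_in bs_in by (rule triple_sum_in_nhd)
    then have "prenorm (sum_list zs) \<le> (1/2) ^ n"
      unfolding split by (intro prenorm_le_if_mem) (simp add: add.assoc)
    then show ?thesis
      using n(1) unfolding a_def by simp
  qed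
qed

text \<open>The infimum over chains turns the weak triangle inequality of \<open>prenorm\<close> into a genuine
  one, and \<open>prenorm_sum_list_le\<close> keeps it within a factor 2 of \<open>prenorm\<close>.\<close>
definition chain_dist :: "'a \<Rightarrow> 'a \<Rightarrow> real" where
  "chain_dist x y = Inf {sum_list (map prenorm zs) | zs. x + sum_list zs = y}"

lemma chain_weights_nonempty: "{sum_list (map prenorm zs) | zs. x + sum_list zs = y} \<noteq> {}"
proof -
  have "x + sum_list [- x + y] = y"
    by (simp add: add.assoc[symmetric])
  then show ?thesis
    by blast
qed

lemma chain_dist_le: "x + sum_list zs = y \<Longrightarrow> chain_dist x y \<le> sum_list (map prenorm zs)"
  unfolding chain_dist_def
  by (rule cInf_lower) (auto intro!: bdd_belowI[of _ 0] simp: sum_list_prenorm_nonneg)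

lemma chain_dist_greatest:
  assumes "\<And>zs. x + sum_list zs = y \<Longrightarrow> c \<le> sum_list (map prenorm zs)"
  shows "c \<le> chain_dist x y"
  unfolding chain_dist_def by (rule cInf_greatest[OF chain_weights_nonempty]) (use assms in auto)

lemma chain_dist_le_prenorm: "chain_dist x y \<le> prenorm (- x + y)"
  using chain_dist_le[of x "[- x + y]" y] by (simp add: add.assoc[symmetric])

lemma prenorm_le_chain_dist: "prenorm (- x + y) \<le> 2 * chain_dist x y"
proof -
  have "prenorm (- x + y) / 2 \<le> chain_dist x y"
  proof (rule chain_dist_greatest)
    fix zs assume "x + sum_list zs = y"
    then have "- x + y = sum_list zs"
      by (auto simp: add.assoc[symmetric])
    then show "prenorm (- x + y) / 2 \<le> sum_list (map prenorm zs)"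
      using prenorm_sum_list_le[of zs] by simp
  qed
  then show ?thesis
    by simp
qed

lemma chain_dist_le_swap: "chain_dist x y \<le> chain_dist y x"
proof (rule chain_dist_greatest)
  fix zs assume "y + sum_list zs = x"
  moreover have "- sum_list zs = sum_list (rev (map uminus zs))"
    by (induction zs) (simp_all add: minus_add)
  ultimately have "x + sum_list (rev (map uminus zs)) = y"
    by (metis add.right_inverse add.assoc add_0_right)
  then have "chain_dist x y \<le> sum_list (map prenorm (rev (map uminus zs)))"
    by (rule chain_dist_le)
  also have "\<dots> = sum_list (map prenorm zs)"
    by (simp add: rev_map[symmetric] comp_def)
  finally show "chain_dist x y \<le> sum_list (map prenorm zs)" .
qed

lemma chain_dist_triangle: "chain_dist x z \<le> chain_dist x y + chain_dist y z"
proof -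
  have "chain_dist x z - sum_list (map prenorm ws) \<le> chain_dist x y" if ws: "y + sum_list ws = z" for ws
  proof (rule chain_dist_greatest)
    fix zs assume "x + sum_list zs = y"
    then have "x + sum_list (zs @ ws) = z"
      using ws by (simp add: add.assoc[symmetric])
    then have "chain_dist x z \<le> sum_list (map prenorm (zs @ ws))"
      by (rule chain_dist_le)
    then show "chain_dist x z - sum_list (map prenorm ws) \<le> sum_list (map prenorm zs)"
      by simp
  qed
  then have "chain_dist x z - chain_dist x y \<le> chain_dist y z"
    by (intro chain_dist_greatest) (simp add: algebra_simps)
  then show ?thesis
    by simp
qed

lemma Metric_space_chain_dist: "Metric_space UNIV chain_dist"
proof
  show "0 \<le> chain_dist x y" for x y
    using prenorm_le_chain_dist[of x y] prenorm_nonneg[of "- x + y"] by linarith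
  show "chain_dist x y = chain_dist y x" for x y
    using chain_dist_le_swap by (meson antisym)
  show "chain_dist x z \<le> chain_dist x y + chain_dist y z" for x y z
    by (rule chain_dist_triangle)
  show "chain_dist x y = 0 \<longleftrightarrow> x = y" for x y
  proof
    assume "chain_dist x y = 0"
    then have "- x + y = 0"
      using prenorm_le_chain_dist[of x y] prenorm_nonneg[of "- x + y"] by simp
    then show "x = y"
      by (simp add: neg_eq_iff_add_eq_0[symmetric] eq_neg_iff_add_eq_0)
  next
    assume "x = y"
    then show "chain_dist x y = 0"
      using chain_dist_le_prenorm[of x y] prenorm_le_chain_dist[of x y] by simp
  qed
qed

lemma chain_dist_less_imp_mem:
  assumes "chain_dist x y < (1/2) ^ Suc n"
  shows "- x + y \<in> V n"
proof -
  have "prenorm (- x + y) < (1/2) ^ n"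
    using prenorm_le_chain_dist[of x y] assms by simp
  then have "- x + y \<in> V (Suc n)"
    by (rule mem_if_prenorm_less)
  then show ?thesis
    using nhd_antimono[of n "Suc n"] by auto
qed

lemma mem_imp_chain_dist_le:
  assumes "- x + y \<in> V n"
  shows "chain_dist x y \<le> (1/2) ^ n"
  using chain_dist_le_prenorm[of x y] prenorm_le_if_mem[OF assms] by simp

lemma metrizable_euclidean: "metrizable_space (euclidean :: 'a topology)"
proof -
  interpret Metric_space UNIV chain_dist
    by (rule Metric_space_chain_dist)
  have "openin mtopology U \<longleftrightarrow> open U" for U
  proof
    assume U: "open U"
    show "openin mtopology U"
      unfolding openin_mtopology
    proof (intro conjI allI impI subset_UNIV)
      fix x assume "x \<in> U"
      then have "open ((\<lambda>z. x + z) -` U)" "0 \<in> (\<lambda>z. x + z) -` U"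
        using U open_vimage_translation by auto
      then obtain n where n: "V n \<subseteq> (\<lambda>z. x + z) -` U"
        using nhds_basis by blast
      have "mball x ((1/2) ^ Suc n) \<subseteq> U"
      proof
        fix y assume "y \<in> mball x ((1/2) ^ Suc n)"
        then have "- x + y \<in> V n"
          by (intro chain_dist_less_imp_mem) simp
        then show "y \<in> U"
          using n by (auto simp: add.assoc[symmetric])
      qed
      then show "\<exists>r>0. mball x r \<subseteq> U"
        by (intro exI[of _ "(1/2::real) ^ Suc n"]) simp
    qed
  next
    assume U: "openin mtopology U"
    show "open U"
    proof (rule open_subopen[THEN iffD2], intro ballI)
      fix x assume "x \<in> U"
      then obtain r where "r > 0" and r: "mball x r \<subseteq> U"
        using U unfolding openin_mtopology by blast
      obtain n where n: "(1/2::real) ^ n < r"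
        using real_arch_pow_inv[OF \<open>r > 0\<close>, of "1/2"] by auto
      have "open ((\<lambda>z. - x + z) -` V n)"
        by (rule open_vimage_translation[OF open_nhd])
      moreover have "x \<in> (\<lambda>z. - x + z) -` V n"
        using zero_in_nhd by simp
      moreover have "(\<lambda>z. - x + z) -` V n \<subseteq> U"
      proof
        fix y assume "y \<in> (\<lambda>z. - x + z) -` V n"
        then have "chain_dist x y < r"
          using mem_imp_chain_dist_le[of x y n] n by simp
        then have "y \<in> mball x r"
          by simp
        then show "y \<in> U"
          using r by blast
      qed
      ultimately show "\<exists>T. open T \<and> x \<in> T \<and> T \<subseteq> U"
        by blast
    qed
  qed
  then have "(euclidean :: 'a topology) = mtopology"
    by (simp add: topology_eq)
  then show ?thesis
    using metrizable_space_mtopology by simp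
qed

end

lemma Birkhoff_Kakutani:
  fixes \<B> :: "'a::topological_group_add set set"
  assumes T1: "t1_space (euclidean :: 'a topology)"
    and \<B>: "countable \<B>" "\<And>B. B \<in> \<B> \<Longrightarrow> open B \<and> 0 \<in> B" "\<And>U. open U \<Longrightarrow> 0 \<in> U \<Longrightarrow> \<exists>B\<in>\<B>. B \<subseteq> U"
  shows "metrizable_space (euclidean :: 'a topology)"
proof -
  have "\<B> \<noteq> {}"
    using \<B>(3)[of UNIV] by blast
  define B where "B = from_nat_into \<B>"
  have B: "open (B n)" "0 \<in> B n" for n
    using \<B>(2) from_nat_into[OF \<open>\<B> \<noteq> {}\<close>] unfolding B_def by auto
  define P where "P n W \<longleftrightarrow> open W \<and> 0 \<in> W \<and> (\<forall>x\<in>W. - x \<in> W) \<and> (n = 0 \<longrightarrow> W = UNIV)"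
    for n :: nat and W :: "'a set"
  define Q where "Q n W W' \<longleftrightarrow> (\<forall>a\<in>W'. \<forall>b\<in>W'. \<forall>c\<in>W'. a + b + c \<in> W \<inter> B n)"
    for n :: nat and W W' :: "'a set"
  have "\<exists>W'. P (Suc n) W' \<and> Q n W W'" if "P n W" for n W
  proof -
    have WB: "open (W \<inter> B n)" "0 \<in> W \<inter> B n"
      using that B unfolding P_def by auto
    obtain W' where W': "open W'" "0 \<in> W'" "\<And>x. x \<in> W' \<Longrightarrow> - x \<in> W'"
      "\<And>a b c. a \<in> W' \<Longrightarrow> b \<in> W' \<Longrightarrow> c \<in> W' \<Longrightarrow> a + b + c \<in> W \<inter> B n"
      using nhds_zero_symmetric_triple_sum_subset[OF WB] by blast
    have "P (Suc n) W'" "Q n W W'"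
      unfolding P_def Q_def using W' by simp_all
    then show ?thesis
      by blast
  qed
  moreover have "P 0 UNIV"
    unfolding P_def by simp
  ultimately obtain V where V: "\<And>n. P n (V n)" "\<And>n. Q n (V n) (V (Suc n))"
    using dependent_nat_choice[of P Q] by blast
  interpret metrizing_nhds_sequence V
  proof
    show "open (V n)" "0 \<in> V n" for n
      using V(1) unfolding P_def by auto
    show "V 0 = UNIV"
      using V(1)[of 0] unfolding P_def by simp
    show "- x \<in> V n" if "x \<in> V n" for n x
      using V(1) that unfolding P_def by blast
    show "a + b + c \<in> V n" if "a \<in> V (Suc n)" "b \<in> V (Suc n)" "c \<in> V (Suc n)" for n a b c
      using V(2) that unfolding Q_def by blast
    have sub: "V (Suc n) \<subseteq> B n" for n
    proof
      fix x assume "x \<in> V (Suc n)"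
      then have "x + 0 + 0 \<in> B n"
        using V(2)[of n] V(1)[of "Suc n"] unfolding P_def Q_def by blast
      then show "x \<in> B n"
        by simp
    qed
    have "\<B> = range B"
      unfolding B_def using range_from_nat_into[OF \<open>\<B> \<noteq> {}\<close> \<B>(1)] by simp
    then have basis: "\<exists>n. B n \<subseteq> U" if "open U" "0 \<in> U" for U
      using \<B>(3)[OF that] by blast
    show "\<exists>n. V n \<subseteq> U" if "open U" "0 \<in> U" for U
      using basis[OF that] sub by blast
    show "x = 0" if "\<And>n. x \<in> V n" for x
    proof (rule ccontr)
      assume "x \<noteq> 0"
      then obtain n where "B n \<subseteq> - {x}"
        using basis[of "- {x}"] closed_singleton_if_t1_space[OF T1] by (auto simp: open_Compl)
      then show False
        using sub that by blast
    qed
  qed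
  show ?thesis
    by (rule metrizable_euclidean)
qed

theorem corollary2p3:
  shows "metrizable_space (euclidean :: 'a::topological_group_add topology) \<longleftrightarrow>
         Frechet_Urysohn_space (euclidean :: 'a topology) \<and> aleph_space (euclidean :: 'a topology)"
proof
  assume "metrizable_space (euclidean :: 'a topology)"
  then show "Frechet_Urysohn_space (euclidean :: 'a topology) \<and> aleph_space (euclidean :: 'a topology)"
    by (simp add: metrizable_imp_Frechet_Urysohn_space metrizable_imp_aleph_space)
next
  assume "Frechet_Urysohn_space (euclidean :: 'a topology) \<and> aleph_space (euclidean :: 'a topology)"
  then have FU: "Frechet_Urysohn_space (euclidean :: 'a topology)"
    and aleph: "aleph_space (euclidean :: 'a topology)"
    by simp_all
  then have T1: "t1_space (euclidean :: 'a topology)" and T2: "Hausdorff_space (euclidean :: 'a topology)"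
    unfolding aleph_space_def by (simp_all add: regular_t1_imp_Hausdorff_space)
  obtain \<C> :: "'a set set" where \<C>: "countable \<C>" "cs_star_network_at 0 \<C>"
    using aleph_space_imp_countable_cs_star_network[OF aleph] by blast
  obtain \<B> :: "'a set set" where \<B>: "countable \<B>" "\<forall>V\<in>\<B>. open V \<and> 0 \<in> V"
    "\<forall>U. open U \<and> 0 \<in> U \<longrightarrow> (\<exists>V\<in>\<B>. V \<subseteq> U)"
    using Frechet_Urysohn_group_countable_nhds_base[OF FU T2 \<C>] by blast
  show "metrizable_space (euclidean :: 'a topology)"
    by (rule Birkhoff_Kakutani[OF T1 \<B>(1)]) (use \<B>(2,3) in auto)
qed

end
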